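(* Let $(G;+)$ be a commutative groupoid and let $M, M'$ be multisets of cardinality $4$ over $G$. Then the deck of $M$ equals the deck of $M'$ if and only if one of the following holds: (i) $M = M'$; (ii) $M = \langle r,s,t,u\rangle$ and $M' = \langle r,s,t,v\rangle$ for some $r,s,t,u,v \in G$ satisfying $x+u = v$ and $x + v = u$ for all $x \in \{r,s,t\}$, and $r+s = s$, $s+t = t$, $t+r = r$.
   Context: A (finite) multiset $M$ over a set $X$ is a function $\mathbf{1}_M \colon X \to \mathbb{N}$ with finite support; $|M| = \sum_x \mathbf{1}_M(x)$ is its cardinality. Multiset sum $\uplus$ adds multiplicities; the difference $M \setminus M'$ has multiplicities $\max(\mathbf{1}_M(x)-\mathbf{1}_{M'}(x),0)$. $\langle x_1,\dots,x_k\rangle$ denotes the multiset in which each element occurs as often as it appears in the list. A commutative groupoid is a set $G$ with a commutative binary operation $+$ (not necessarily associative). Cards and deck: for a multiset $M$ of cardinality $n \geq 2$ over $G$, fix $(m_1,\dots,m_n) \in G^n$ with $M = \langle m_1,\dots,m_n\rangle$; for $I = \{i,j\}$, $1 \le i<j \le n$, the card $M_I$ is $M \setminus \langle m_i, m_j\rangle \uplus \langle m_i + m_j\rangle$. The deck of $M$ is the multiset $\langle M_I : I \rangle$ of all $\binom{n}{2}$ cards (independent of the chosen tuple). *)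

theory Defs
  imports "HOL-Library.Multiset"
begin

text \<open>A commutative groupoid is represented by a carrier type 'a with a binary
operation f (assumed commutative where needed).\<close>

definition card_of :: "('a \<Rightarrow> 'a \<Rightarrow> 'a) \<Rightarrow> 'a list \<Rightarrow> nat \<Rightarrow> nat \<Rightarrow> 'a multiset" where
  "card_of f xs i j = mset xs - {# xs ! i, xs ! j #} + {# f (xs ! i) (xs ! j) #}"

definition deck_list :: "('a \<Rightarrow> 'a \<Rightarrow> 'a) \<Rightarrow> 'a list \<Rightarrow> 'a multiset multiset" where
  "deck_list f xs =
     image_mset (\<lambda>(i, j). card_of f xs i j)
       (mset_set {(i, j). i < j \<and> j < length xs})"

definition deck :: "('a \<Rightarrow> 'a \<Rightarrow> 'a) \<Rightarrow> 'a multiset \<Rightarrow> 'a multiset multiset" where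
  "deck f M = deck_list f (SOME xs. mset xs = M)"

end

theory Submission
  imports Defs
begin

text \<open>
  For a commutative operation the deck counted twice is the deck of cards indexed by
  ordered pairs. Summing all its cards, every element of a four-element multiset M
  appears 6 times, together with the 12 products of ordered pairs. If M and M' have
  the same deck but differ, the surplus of 6 copies of each element of M - M' must
  be produced by the 12 products of M'; this leaves room for at most two such elements,
  and two are impossible because the product of the two common elements would then lie
  in both M - M' and M' - M. So M = {r,s,t,u} and M' = {r,s,t,v} with u \<noteq> v, and
  the multiplicities of v and u in the sums force x + u = v and x + v = u for x = r,s,t.
  After that, the cards of the two decks coincide up to exchanging u and v; an extremal
  argument on the number of u's shows that the cards {s+t, r}, {r+t, s}, {r+s, t} are a
  permutation of {s,t}, {r,t}, {r,s}, which is the cyclic absorption condition.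
\<close>

definition ordered_deck :: "('a \<Rightarrow> 'a \<Rightarrow> 'a) \<Rightarrow> 'a multiset \<Rightarrow> 'a multiset multiset" where
  "ordered_deck f M = (\<Sum>x\<in>#M. {# add_mset (f x y) (M - {#x, y#}). y \<in># M - {#x#} #})"

definition ordered_products :: "('a \<Rightarrow> 'a \<Rightarrow> 'a) \<Rightarrow> 'a multiset \<Rightarrow> 'a multiset" where
  "ordered_products f M = (\<Sum>x\<in>#M. {# f x y. y \<in># M - {#x#} #})"

subsection \<open>The deck and the ordered deck\<close>

(* Stated with Suc because that is how simp presents length [a, b, c, d]. *)
lemma pairs_below_four:
  "{(i, j). i < j \<and> j < Suc (Suc (Suc (Suc 0)))} = {(0,1), (0,2), (0,3), (1,2), (1,3), (2,3)}"
  by (auto simp: less_Suc_eq)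

lemma deck_add_deck_eq_ordered_deck:
  assumes comm: "\<And>x y. f x y = f y x" and size: "size M = 4"
  shows "deck f M + deck f M = ordered_deck f M"
proof -
  define xs where "xs = (SOME xs. mset xs = M)"
  have xs: "mset xs = M" unfolding xs_def by (rule someI_ex) (rule ex_mset)
  then have "length xs = 4" using size by (metis size_mset)
  then obtain a b c d where abcd: "xs = [a, b, c, d]"
    by (auto simp: length_Suc_conv numeral_eq_Suc)
  have "deck f M = deck_list f [a, b, c, d]" unfolding deck_def xs_def[symmetric] abcd ..
  moreover have "M = {#a, b, c, d#}" using xs abcd by simp
  ultimately show ?thesis
    unfolding deck_list_def ordered_deck_def
    by (simp add: pairs_below_four card_of_def comm add_mset_commute)
qed

lemma mset_add_self_cancel:
  "(A :: 'a multiset) + A = B + B \<Longrightarrow> A = B"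
  by (metis repeat_mset_cancel1 numeral_2_eq_2 repeat_mset_Suc repeat_mset_0 add_0_right
      zero_neq_numeral)

lemma deck_eq_iff_ordered_deck_eq:
  assumes comm: "\<And>x y. f x y = f y x" and "size M = 4" and "size M' = 4"
  shows "deck f M = deck f M' \<longleftrightarrow> ordered_deck f M = ordered_deck f M'"
  unfolding deck_add_deck_eq_ordered_deck[OF comm assms(2), symmetric]
    deck_add_deck_eq_ordered_deck[OF comm assms(3), symmetric]
  using mset_add_self_cancel[of "deck f M" "deck f M'"] by auto

subsection \<open>Two decks agree only if the multisets differ in one element\<close>

lemma sum_ordered_deck_four:
  "sum_mset (ordered_deck f {#a, b, c, d#}) =
     ordered_products f {#a, b, c, d#} + repeat_mset 6 {#a, b, c, d#}"
  by (simp add: ordered_deck_def ordered_products_def add_mset_commute numeral_eq_Suc)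

lemma mem_ordered_products:
  assumes "x \<in># M" and "y \<in># M - {#x#}"
  shows "f x y \<in># ordered_products f M"
proof -
  have "f x y \<in># {# f x y. y \<in># M - {#x#} #}" using assms(2) by simp
  moreover have "{# f x y. y \<in># M - {#x#} #} \<in># {# {# f x y. y \<in># M - {#x#} #}. x \<in># M #}"
    using assms(1) by simp
  ultimately show ?thesis unfolding ordered_products_def by (meson in_Union_mset_iff)
qed

lemma size_four_mset_cases:
  assumes "size M = 4"
  obtains a b c d where "M = {#a, b, c, d#}"
proof -
  obtain xs where "mset xs = M" "length xs = 4" using assms by (metis ex_mset size_mset)
  moreover from \<open>length xs = 4\<close> obtain a b c d where "xs = [a, b, c, d]"
    by (auto simp: length_Suc_conv numeral_eq_Suc)
  ultimately have "M = {#a, b, c, d#}" by simp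
  then show ?thesis by (rule that)
qed

lemma size_ordered_products_four:
  assumes "size M = 4"
  shows "size (ordered_products f M) = 12"
  using assms by (elim size_four_mset_cases) (simp add: ordered_products_def)

lemma repeat_diff_subseteq_ordered_products:
  assumes "size M = 4" "size M' = 4" and eq: "ordered_deck f M = ordered_deck f M'"
  shows "repeat_mset 6 (M - M') \<subseteq># ordered_products f M'"
proof -
  obtain a b c d where M: "M = {#a, b, c, d#}" using assms(1) by (rule size_four_mset_cases)
  obtain a' b' c' d' where M': "M' = {#a', b', c', d'#}" using assms(2) by (rule size_four_mset_cases)
  have "ordered_products f M + repeat_mset 6 M = ordered_products f M' + repeat_mset 6 M'"
    using arg_cong[OF eq, of sum_mset] unfolding M M' sum_ordered_deck_four .
  then have "count (ordered_products f M) x + 6 * count M x =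
      count (ordered_products f M') x + 6 * count M' x" for x
    by (metis count_repeat_mset count_union)
  then have "count (repeat_mset 6 (M - M')) x \<le> count (ordered_products f M') x" for x
    by (metis count_diff count_repeat_mset diff_mult_distrib2 le_diff_conv add.commute le_add1)
  then show ?thesis by (simp add: subseteq_mset_def)
qed

lemma subset_mset_size_eq: "(A :: 'a multiset) \<subseteq># B \<Longrightarrow> size A = size B \<Longrightarrow> A = B"
  using mset_subset_size subset_mset.le_less by fastforce

lemma ordered_deck_eq_imp_differ_in_one:
  assumes size: "size M = 4" "size M' = 4" and neq: "M \<noteq> M'"
    and eq: "ordered_deck f M = ordered_deck f M'"
  obtains r s t u v where "M = {#r, s, t, u#}" "M' = {#r, s, t, v#}" "u \<noteq> v"
proof -
  define P where "P = ordered_products f M"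
  define P' where "P' = ordered_products f M'"
  define A where "A = M - M'"
  define B where "B = M' - M"
  define K where "K = M \<inter># M'"
  have MK: "M = K + A" and MK': "M' = K + B"
    unfolding A_def B_def K_def by (auto simp: multiset_eq_iff)
  have disj: "\<And>x. count A x = 0 \<or> count B x = 0" unfolding A_def B_def by auto
  have size_P: "size P = 12" "size P' = 12"
    unfolding P_def P'_def using size by (simp_all add: size_ordered_products_four)
  have sub_A: "repeat_mset 6 A \<subseteq># P'"
    unfolding A_def P'_def using repeat_diff_subseteq_ordered_products[OF size eq] .
  have sub_B: "repeat_mset 6 B \<subseteq># P"
    unfolding B_def P_def using repeat_diff_subseteq_ordered_products[OF size(2,1) eq[symmetric]] .
  have size_K: "size K + size A = 4" "size K + size B = 4" using size MK MK' by auto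
  have "6 * size A \<le> 12" using size_mset_mono[OF sub_A] size_P by simp
  moreover have "size A \<noteq> 0"
  proof
    assume "size A = 0"
    then have "A = {#}" "B = {#}" using size_K by auto
    then show False using neq MK MK' by simp
  qed
  moreover have "size A \<noteq> 2"
  proof
    assume two: "size A = 2"
    then have "size K = 2" using size_K by simp
    then obtain k1 k2 where K: "K = {#k1, k2#}"
      by (metis size_eq_Suc_imp_eq_union size_add_mset size_eq_0_iff_empty numeral_2_eq_2 Suc_inject)
    have "repeat_mset 6 A = P'" "repeat_mset 6 B = P"
      using two subset_mset_size_eq[OF sub_A] subset_mset_size_eq[OF sub_B] size_P size_K by auto
    moreover have "f k1 k2 \<in># P" "f k1 k2 \<in># P'"
      unfolding P_def P'_def MK MK' K by (simp_all add: mem_ordered_products)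
    ultimately have "f k1 k2 \<in># A" "f k1 k2 \<in># B"
      by (metis count_repeat_mset count_eq_zero_iff mult_is_0)+
    then show False using disj by (meson count_eq_zero_iff)
  qed
  ultimately have one: "size A = 1" "size B = 1" using size_K by arith+
  then obtain u v where u: "A = {#u#}" and v: "B = {#v#}" by (metis size_1_singleton_mset)
  have "size K = 3" using one size_K by simp
  then obtain r s t where "K = {#r, s, t#}"
    by (metis size_eq_Suc_imp_eq_union size_add_mset size_eq_0_iff_empty numeral_3_eq_3 Suc_inject)
  then have "M = {#r, s, t, u#}" "M' = {#r, s, t, v#}" unfolding MK MK' u v by simp_all
  moreover have "u \<noteq> v" using disj[of u] u v by auto
  ultimately show ?thesis using that by blast
qed

subsection \<open>Exchanging one element\<close>

lemma ordered_products_four: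
  assumes comm: "\<And>x y. f x y = f y x"
  shows "ordered_products f {#r, s, t, u#} =
    {#f r s, f r s, f r t, f r t, f s t, f s t#} + {#f r u, f s u, f t u#} + {#f r u, f s u, f t u#}"
  unfolding ordered_products_def
  by (simp add: add_mset_commute comm[of u] comm[of t s] comm[of t r] comm[of s r])

lemma count_triple_ge_three: "3 \<le> count {#a, b, c#} x \<Longrightarrow> a = x \<and> b = x \<and> c = x"
  by (auto split: if_splits)

lemma count_exchange_cancel:
  assumes eq: "C + U + U + repeat_mset n (add_mset u K) = C + V + V + repeat_mset n (add_mset v K)"
    and "u \<noteq> v"
  shows "count U v + count U v = count V v + count V v + n"
    and "count U u + count U u + n = count V u + count V u"
  using arg_cong[OF eq, of "\<lambda>N. count N v"] arg_cong[OF eq, of "\<lambda>N. count N u"] \<open>u \<noteq> v\<close>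
  by auto

lemma ordered_deck_eq_imp_swap:
  assumes comm: "\<And>x y. f x y = f y x" and uv: "u \<noteq> v"
    and eq: "ordered_deck f {#r, s, t, u#} = ordered_deck f {#r, s, t, v#}"
  shows "\<forall>x \<in> {r, s, t}. f x u = v \<and> f x v = u"
proof -
  let ?C = "{#f r s, f r s, f r t, f r t, f s t, f s t#}"
  let ?U = "{#f r u, f s u, f t u#}" and ?V = "{#f r v, f s v, f t v#}"
  have E: "?C + ?U + ?U + repeat_mset 6 {#r, s, t, u#} = ?C + ?V + ?V + repeat_mset 6 {#r, s, t, v#}"
    using arg_cong[OF eq, of sum_mset] unfolding sum_ordered_deck_four ordered_products_four[OF comm] .
  have last_first: "{#r, s, t, w#} = add_mset w {#r, s, t#}" for w by (simp add: add_mset_commute)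
  have "?C + ?U + ?U + repeat_mset 6 (add_mset u {#r, s, t#}) =
      ?C + ?V + ?V + repeat_mset 6 (add_mset v {#r, s, t#})"
    using E by (simp only: last_first)
  note counts = count_exchange_cancel[OF this uv]
  have half: "a + a = b + b + 6 \<Longrightarrow> 3 \<le> a" for a b :: nat by linarith
  have "3 \<le> count ?U v" using half[OF counts(1)] .
  from count_triple_ge_three[OF this] have U: "f r u = v" "f s u = v" "f t u = v" by simp_all
  then have "count ?U u = 0" using uv by simp
  then have "3 \<le> count ?V u" using half[of "count ?V u" 0] counts(2) by simp
  from count_triple_ge_three[OF this] have "f r v = u" "f s v = u" "f t v = u" by simp_all
  with U show ?thesis by simp
qed

lemma ordered_deck_swap_form:
  assumes comm: "\<And>x y. f x y = f y x"
    and swap: "\<forall>x \<in> {r, s, t}. f x u = v \<and> f x v = u"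
  defines "P \<equiv> {#{#f s t, r#}, {#f r t, s#}, {#f r s, t#}#}"
    and "Q \<equiv> {#{#s, t#}, {#r, t#}, {#r, s#}#}"
  shows "ordered_deck f {#r, s, t, u#} =
      image_mset (add_mset u) (P + P) + image_mset (add_mset v) (Q + Q)"
    and "ordered_deck f {#r, s, t, v#} =
      image_mset (add_mset v) (P + P) + image_mset (add_mset u) (Q + Q)"
  using swap unfolding ordered_deck_def P_def Q_def
  by (simp_all add: add_mset_commute comm[of u] comm[of v] comm[of t s] comm[of t r] comm[of s r])

lemma image_add_mset_swap_not_max:
  assumes eq: "image_mset (add_mset u) X + image_mset (add_mset v) Y =
      image_mset (add_mset v) X + image_mset (add_mset u) Y"
    and uv: "u \<noteq> v" and disj: "\<And>A. count X A = 0 \<or> count Y A = 0"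
    and A: "A \<in># X" and max: "\<And>B. B \<in># X + Y \<Longrightarrow> count B u \<le> count A u"
  shows False
proof -
  have "add_mset u A \<in># image_mset (add_mset v) X + image_mset (add_mset u) Y"
    using A eq[symmetric] by simp
  then consider B where "B \<in># X" "add_mset u A = add_mset v B"
    | B where "B \<in># Y" "add_mset u A = add_mset u B"
    by auto
  then show False
  proof cases
    case 1
    then have "count B u = Suc (count A u)" using uv by (metis count_add_mset)
    with max[of B] 1 show False by simp
  next
    case 2
    with A disj[of A] show False by (simp add: count_eq_zero_iff)
  qed
qed

text \<open>
  Cancel the common part of X and Y; if anything remained, a card with the maximal number
  of u's would have to reappear with one more u.
\<close>

lemma image_add_mset_swap_cancel:
  assumes eq: "image_mset (add_mset u) X + image_mset (add_mset v) Y =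
      image_mset (add_mset v) X + image_mset (add_mset u) Y"
    and uv: "u \<noteq> v"
  shows "X = Y"
proof -
  define X' where "X' = X - Y"
  define Y' where "Y' = Y - X"
  define Z where "Z = X \<inter># Y"
  have XZ: "X = Z + X'" and YZ: "Y = Z + Y'"
    unfolding X'_def Y'_def Z_def by (auto simp: multiset_eq_iff)
  have disj: "\<And>A. count X' A = 0 \<or> count Y' A = 0" unfolding X'_def Y'_def by auto
  have eq': "image_mset (add_mset u) X' + image_mset (add_mset v) Y' =
      image_mset (add_mset v) X' + image_mset (add_mset u) Y'"
    using eq unfolding XZ YZ by (simp add: add_ac)
  have "X' + Y' = {#}"
  proof (rule ccontr)
    assume "X' + Y' \<noteq> {#}"
    let ?counts = "(\<lambda>B. count B u) ` set_mset (X' + Y')"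
    have "Max ?counts \<in> ?counts" using \<open>X' + Y' \<noteq> {#}\<close> by (intro Max_in) simp_all
    then obtain A where A: "A \<in># X' + Y'" and "count A u = Max ?counts"
      by (metis (no_types, lifting) imageE)
    then have max: "\<And>B. B \<in># X' + Y' \<Longrightarrow> count B u \<le> count A u" by simp
    show False
    proof (cases "A \<in># X'")
      case True
      from image_add_mset_swap_not_max[OF eq' uv disj True max] show False .
    next
      case False
      with A have "A \<in># Y'" by auto
      have eq'': "image_mset (add_mset u) Y' + image_mset (add_mset v) X' =
          image_mset (add_mset v) Y' + image_mset (add_mset u) X'"
        using eq' by (metis add.commute)
      have disj': "count Y' B = 0 \<or> count X' B = 0" for B
        using disj[of B] by (simp only: disj_commute)
      have max': "B \<in># Y' + X' \<Longrightarrow> count B u \<le> count A u" for B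
        using max by (simp only: add.commute)
      from image_add_mset_swap_not_max[OF eq'' uv disj' \<open>A \<in># Y'\<close> max'] show False .
    qed
  qed
  then show ?thesis using XZ YZ by simp
qed

lemma pair_mset_eq_iff: "{#a, b#} = {#c, d#} \<longleftrightarrow> (a = c \<and> b = d) \<or> (a = d \<and> b = c)"
  by (auto simp: add_eq_conv_diff)

lemma triple_mset_eq_cases:
  assumes "{#x1, x2, x3#} = {#y1, y2, y3#}"
  shows "(x1 = y1 \<and> x2 = y2 \<and> x3 = y3) \<or> (x1 = y1 \<and> x2 = y3 \<and> x3 = y2) \<or>
    (x1 = y2 \<and> x2 = y1 \<and> x3 = y3) \<or> (x1 = y2 \<and> x2 = y3 \<and> x3 = y1) \<or>
    (x1 = y3 \<and> x2 = y1 \<and> x3 = y2) \<or> (x1 = y3 \<and> x2 = y2 \<and> x3 = y1)"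
proof -
  have "x1 \<in># {#y1, y2, y3#}" using assms by (metis union_single_eq_member)
  then consider "x1 = y1" | "x1 = y2" | "x1 = y3" by auto
  then show ?thesis
  proof cases
    case 1
    then have "{#x2, x3#} = {#y2, y3#}" using assms by simp
    then show ?thesis using 1 by (auto simp: pair_mset_eq_iff)
  next
    case 2
    then have "{#x2, x3#} = {#y1, y3#}" using assms by (simp add: add_mset_commute[of y1 y2])
    then show ?thesis using 2 by (auto simp: pair_mset_eq_iff)
  next
    case 3
    then have "{#x2, x3#} = {#y1, y2#}" using assms by (simp add: add_mset_commute)
    then show ?thesis using 3 by (auto simp: pair_mset_eq_iff)
  qed
qed

lemma cyclic_absorption_of_cards_eq:
  assumes comm: "\<And>x y. f x y = f y x"
    and "{#{#f s t, r#}, {#f r t, s#}, {#f r s, t#}#} = {#{#s, t#}, {#r, t#}, {#r, s#}#}"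
  shows "(f r s = s \<and> f s t = t \<and> f t r = r) \<or> (f s r = r \<and> f r t = t \<and> f t s = s)"
  using triple_mset_eq_cases[OF assms(2)] comm[of s r] comm[of t r] comm[of t s]
  unfolding pair_mset_eq_iff by smt

lemma ordered_deck_eq_imp_cyclic:
  assumes comm: "\<And>x y. f x y = f y x" and uv: "u \<noteq> v"
    and swap: "\<forall>x \<in> {r, s, t}. f x u = v \<and> f x v = u"
    and eq: "ordered_deck f {#r, s, t, u#} = ordered_deck f {#r, s, t, v#}"
  shows "(f r s = s \<and> f s t = t \<and> f t r = r) \<or> (f s r = r \<and> f r t = t \<and> f t s = s)"
proof -
  let ?P = "{#{#f s t, r#}, {#f r t, s#}, {#f r s, t#}#}" and ?Q = "{#{#s, t#}, {#r, t#}, {#r, s#}#}"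
  have "image_mset (add_mset u) (?P + ?P) + image_mset (add_mset v) (?Q + ?Q) =
      image_mset (add_mset v) (?P + ?P) + image_mset (add_mset u) (?Q + ?Q)"
    using eq unfolding ordered_deck_swap_form[OF comm swap] .
  then have "?P + ?P = ?Q + ?Q" using uv by (rule image_add_mset_swap_cancel)
  then show ?thesis by (rule cyclic_absorption_of_cards_eq[OF comm mset_add_self_cancel])
qed

lemma ordered_deck_exchange_eq:
  assumes comm: "\<And>x y. f x y = f y x"
    and swap: "\<forall>x \<in> {r, s, t}. f x u = v \<and> f x v = u"
    and cyclic: "f r s = s" "f s t = t" "f t r = r"
  shows "ordered_deck f {#r, s, t, u#} = ordered_deck f {#r, s, t, v#}"
proof -
  have "{#{#f s t, r#}, {#f r t, s#}, {#f r s, t#}#} = {#{#s, t#}, {#r, t#}, {#r, s#}#}"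
    using cyclic comm[of r t] by (simp add: add_mset_commute)
  then show ?thesis unfolding ordered_deck_swap_form[OF comm swap] by simp
qed

lemma ordered_deck_eq_imp_exchange:
  assumes comm: "\<And>x y. f x y = f y x"
    and size: "size M = 4" "size M' = 4" and neq: "M \<noteq> M'"
    and eq: "ordered_deck f M = ordered_deck f M'"
  shows "\<exists>r s t u v. M = {#r, s, t, u#} \<and> M' = {#r, s, t, v#} \<and>
    (\<forall>x \<in> {r, s, t}. f x u = v \<and> f x v = u) \<and> f r s = s \<and> f s t = t \<and> f t r = r"
proof -
  obtain r s t u v where M: "M = {#r, s, t, u#}" and M': "M' = {#r, s, t, v#}" and uv: "u \<noteq> v"
    using ordered_deck_eq_imp_differ_in_one[OF size neq eq] .
  have eq': "ordered_deck f {#r, s, t, u#} = ordered_deck f {#r, s, t, v#}"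
    using eq unfolding M M' .
  note swap = ordered_deck_eq_imp_swap[OF comm uv eq']
  from ordered_deck_eq_imp_cyclic[OF comm uv swap eq']
  consider "f r s = s" "f s t = t" "f t r = r" | "f s r = r" "f r t = t" "f t s = s"
    by blast
  then show ?thesis
  proof cases
    case 1
    with M M' swap show ?thesis by (intro exI[of _ r] exI[of _ s] exI[of _ t] exI[of _ u] exI[of _ v]) simp
  next
    case 2
    with M M' swap show ?thesis
      by (intro exI[of _ s] exI[of _ r] exI[of _ t] exI[of _ u] exI[of _ v]) (simp add: add_mset_commute)
  qed
qed

theorem mainTheorem4:
  fixes f :: "'a \<Rightarrow> 'a \<Rightarrow> 'a" and M M' :: "'a multiset"
  assumes comm: "\<And>x y. f x y = f y x"
    and "size M = 4" and "size M' = 4"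
  shows "deck f M = deck f M' \<longleftrightarrow>
    (M = M' \<or>
     (\<exists>r s t u v. M = {#r, s, t, u#} \<and> M' = {#r, s, t, v#} \<and>
        (\<forall>x \<in> {r, s, t}. f x u = v \<and> f x v = u) \<and>
        f r s = s \<and> f s t = t \<and> f t r = r))" (is "_ \<longleftrightarrow> M = M' \<or> ?exchange")
proof -
  have "deck f M = deck f M' \<longleftrightarrow> ordered_deck f M = ordered_deck f M'"
    using deck_eq_iff_ordered_deck_eq[of f, OF comm assms(2,3)] .
  also have "\<dots> \<longleftrightarrow> M = M' \<or> ?exchange"
  proof
    assume eq: "ordered_deck f M = ordered_deck f M'"
    show "M = M' \<or> ?exchange"
    proof (cases "M = M'")
      case False
      then have ?exchange by (rule ordered_deck_eq_imp_exchange[of f, OF comm assms(2,3) _ eq])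
      then show ?thesis ..
    qed simp
  next
    assume "M = M' \<or> ?exchange"
    then show "ordered_deck f M = ordered_deck f M'"
    proof
      assume ?exchange
      then obtain r s t u v where M: "M = {#r, s, t, u#}" and M': "M' = {#r, s, t, v#}"
        and swap: "\<forall>x \<in> {r, s, t}. f x u = v \<and> f x v = u"
        and cyclic: "f r s = s" "f s t = t" "f t r = r"
        by (elim exE conjE)
      show ?thesis unfolding M M' by (rule ordered_deck_exchange_eq[of f, OF comm swap cyclic])
    qed simp
  qed
  finally show ?thesis .
qed

end
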